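(* Let $e$ be a real-valued random variable with $\mathbb{E}[e]=0$, and let $X$ be a stochastic process taking values in $L^2([0,1])$, defined on the same probability space. Let $\{\psi_\nu\}_{\nu\ge1}$ be an arbitrary fixed orthonormal basis of $L^2([0,1])$ and, for each $p\ge1$, let $X^p=\big(\langle X,\psi_1\rangle_{L^2},\ldots,\langle X,\psi_p\rangle_{L^2}\big)^{\top}\in\mathbb{R}^p$, where $\langle f,g\rangle_{L^2}=\int_0^1 f(t)g(t)\,dt$. Let $\mathbb{S}^p=\{\gamma\in\mathbb{R}^p:\|\gamma\|=1\}$ be the unit sphere in $\mathbb{R}^p$ (Euclidean norm). Then the following three statements are equivalent: (i) $\mathbb{E}\{e\mid X\}=0$ almost surely; (ii) for every $p\ge1$ and every $\gamma\in\mathbb{S}^p$, $\mathbb{E}\{e\mid \gamma^{\top}X^p\}=0$ almost surely; (iii) for every $p\ge 1$, every $\gamma\in\mathbb{S}^p$ and every $x\in\mathbb{R}$, $\mathbb{E}\{e\, I(\gamma^{\top}X^p\le x)\}=0$, where $I(\cdot)$ denotes the indicator function.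
   Context: $L^2([0,1])$ is the Hilbert space of square-integrable real functions on $[0,1]$; $X$ is viewed as a random element of this space, and conditioning on $X$ means conditioning on the $\sigma$-field generated by $\{X(t):0\le t\le 1\}$. *)

theory Defs
  imports "HOL-Probability.Probability"
begin

definition L2_01 :: "(real \<Rightarrow> real) \<Rightarrow> bool" where
  "L2_01 f \<longleftrightarrow> set_borel_measurable lborel {0..1} f \<and>
                 set_integrable lborel {0..1} (\<lambda>t. (f t)^2)"

definition L2_inner :: "(real \<Rightarrow> real) \<Rightarrow> (real \<Rightarrow> real) \<Rightarrow> real" where
  "L2_inner f g = set_lebesgue_integral lborel {0..1} (\<lambda>t. f t * g t)"

text \<open>An orthonormal basis (complete orthonormal system) of L2([0,1]), indexed from 0.\<close>
definition orthonormal_basis_L2 :: "(nat \<Rightarrow> real \<Rightarrow> real) \<Rightarrow> bool" where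
  "orthonormal_basis_L2 \<psi> \<longleftrightarrow>
     (\<forall>i. L2_01 (\<psi> i)) \<and>
     (\<forall>i j. L2_inner (\<psi> i) (\<psi> j) = (if i = j then 1 else 0)) \<and>
     (\<forall>f. L2_01 f \<and> (\<forall>i. L2_inner f (\<psi> i) = 0) \<longrightarrow>
          (AE t in lborel. t \<in> {0..1} \<longrightarrow> f t = 0))"

text \<open>The sigma-field generated by X viewed as a random element of L2([0,1]).\<close>
definition sigma_L2 :: "'a measure \<Rightarrow> ('a \<Rightarrow> real \<Rightarrow> real) \<Rightarrow> 'a measure" where
  "sigma_L2 M X = sigma (space M)
     {(\<lambda>\<omega>. L2_inner (X \<omega>) g) -` B \<inter> space M | g B. L2_01 g \<and> B \<in> sets borel}"

text \<open>gamma^T X^p, with X^p = (<X,psi_0>, ..., <X,psi_(p-1)>).\<close>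
definition proj :: "nat \<Rightarrow> (nat \<Rightarrow> real) \<Rightarrow> (nat \<Rightarrow> real \<Rightarrow> real) \<Rightarrow> (real \<Rightarrow> real) \<Rightarrow> real" where
  "proj p \<gamma> \<psi> f = (\<Sum>i<p. \<gamma> i * L2_inner f (\<psi> i))"

end

theory Submission
  imports Defs
begin

(* By the defining property of conditional expectation, E(e | F) = 0 a.s. iff the integral of e
   over every set of F vanishes. Hence (i) implies (ii) because the sigma-algebra of gamma^T X^p
   lies in that of X, and (ii) implies (iii) because the half-lines of gamma^T X^p belong to it.

   For (iii) implies (i), let Y_i = <X, psi_i>. Vanishing half-line integrals along every
   direction say that the image of the signed measure e dM under each finite linear combination
   of the Y_i is zero, so its Fourier transform vanishes as well. Trading the Fourier variable for
   an indicator one coordinate at a time (Levy's uniqueness theorem) shows that e integrates to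
   zero over every lower orthant {Y_i <= x_i for i in I}, I finite, and Dynkin's pi-lambda theorem
   extends this to the sigma-algebra generated by the Y_i. By Parseval's identity, <X, g> is the
   pointwise limit of sum_(i<p) <g, psi_i> Y_i, so this sigma-algebra contains that of X. *)

section \<open>Square-integrable functions\<close>

definition square_integrable :: "'a measure \<Rightarrow> ('a \<Rightarrow> real) \<Rightarrow> bool" where
  "square_integrable N f \<longleftrightarrow> f \<in> borel_measurable N \<and> integrable N (\<lambda>t. (f t)\<^sup>2)"

definition inner_L2 :: "'a measure \<Rightarrow> ('a \<Rightarrow> real) \<Rightarrow> ('a \<Rightarrow> real) \<Rightarrow> real" where
  "inner_L2 N f g = (\<integral>t. f t * g t \<partial>N)"

lemma integrable_mult_square_integrable:
  assumes "square_integrable N f" "square_integrable N g"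
  shows "integrable N (\<lambda>t. f t * g t)"
proof (rule Bochner_Integration.integrable_bound)
  show "integrable N (\<lambda>t. (f t)\<^sup>2 + (g t)\<^sup>2)"
    using assms by (simp add: square_integrable_def)
  show "(\<lambda>t. f t * g t) \<in> borel_measurable N"
    using assms by (auto simp: square_integrable_def)
  show "AE t in N. norm (f t * g t) \<le> norm ((f t)\<^sup>2 + (g t)\<^sup>2)"
  proof (rule AE_I2)
    fix t
    have "0 \<le> \<bar>f t\<bar> * \<bar>g t\<bar>" by simp
    with sum_squares_bound[of "\<bar>f t\<bar>" "\<bar>g t\<bar>"]
    show "norm (f t * g t) \<le> norm ((f t)\<^sup>2 + (g t)\<^sup>2)"
      by (simp add: abs_mult del: mult_nonneg_nonneg abs_mult_self_eq zero_le_mult_iff)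
  qed
qed

lemma square_integrable_add:
  assumes "square_integrable N f" "square_integrable N g"
  shows "square_integrable N (\<lambda>t. f t + g t)"
proof -
  have "integrable N (\<lambda>t. (f t)\<^sup>2 + 2 * (f t * g t) + (g t)\<^sup>2)"
    using assms integrable_mult_square_integrable[OF assms] by (simp add: square_integrable_def)
  then show ?thesis
    using assms by (auto simp: square_integrable_def power2_sum algebra_simps)
qed

lemma square_integrable_scale:
  "square_integrable N f \<Longrightarrow> square_integrable N (\<lambda>t. c * f t)"
  by (auto simp: square_integrable_def power_mult_distrib)

lemma square_integrable_diff:
  assumes "square_integrable N f" "square_integrable N g"
  shows "square_integrable N (\<lambda>t. f t - g t)"
  using square_integrable_add[OF assms(1) square_integrable_scale[OF assms(2), of "-1"]] by simp

lemma square_integrable_sum: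
  "(\<And>i. i \<in> S \<Longrightarrow> square_integrable N (F i)) \<Longrightarrow> square_integrable N (\<lambda>t. \<Sum>i\<in>S. F i t)"
proof (induction S rule: infinite_finite_induct)
  case (insert i S)
  then show ?case by (simp add: square_integrable_add)
qed (simp_all add: square_integrable_def)

lemma (in finite_measure) square_integrable_const: "square_integrable M (\<lambda>t. c)"
  by (simp add: square_integrable_def)

lemma inner_L2_self_nonneg: "0 \<le> inner_L2 N f f"
  unfolding inner_L2_def by (intro integral_nonneg_AE) simp

lemma inner_L2_commute: "inner_L2 N f g = inner_L2 N g f"
  by (simp add: inner_L2_def mult.commute)

lemma inner_L2_diff_left:
  assumes "square_integrable N f" "square_integrable N g" "square_integrable N h"
  shows "inner_L2 N (\<lambda>t. f t - g t) h = inner_L2 N f h - inner_L2 N g h"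
  using integrable_mult_square_integrable[OF assms(1,3)] integrable_mult_square_integrable[OF assms(2,3)]
  by (simp add: inner_L2_def left_diff_distrib)

lemma inner_L2_sum_left:
  assumes "\<And>i. i \<in> S \<Longrightarrow> square_integrable N (F i)" "square_integrable N h"
  shows "inner_L2 N (\<lambda>t. \<Sum>i\<in>S. F i t) h = (\<Sum>i\<in>S. inner_L2 N (F i) h)"
  unfolding inner_L2_def sum_distrib_right
  by (rule Bochner_Integration.integral_sum) (use assms integrable_mult_square_integrable in blast)

lemma inner_L2_scale_left: "inner_L2 N (\<lambda>t. c * f t) g = c * inner_L2 N f g"
  by (simp add: inner_L2_def mult.assoc)

lemma inner_L2_Cauchy_Schwarz:
  assumes f: "square_integrable N f" and g: "square_integrable N g"
  shows "(inner_L2 N f g)\<^sup>2 \<le> inner_L2 N f f * inner_L2 N g g"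
proof -
  have [measurable]: "f \<in> borel_measurable N" "g \<in> borel_measurable N"
    using f g by (simp_all add: square_integrable_def)
  have fg: "integrable N (\<lambda>t. \<bar>f t\<bar> * \<bar>g t\<bar>)"
    using integrable_mult_square_integrable[OF f g] by (simp add: abs_mult[symmetric])
  have nn: "(\<integral>\<^sup>+t. ennreal ((h t)\<^sup>2) \<partial>N) = ennreal (\<integral>t. (h t)\<^sup>2 \<partial>N)"
    if "square_integrable N h" for h
    using that
    by (subst nn_integral_eq_integral[symmetric]) (auto simp: square_integrable_def ennreal_power)
  have "\<bar>inner_L2 N f g\<bar> \<le> (\<integral>t. \<bar>f t\<bar> * \<bar>g t\<bar> \<partial>N)"
    unfolding inner_L2_def abs_mult[symmetric] by (rule integral_abs_bound)
  then have "\<bar>inner_L2 N f g\<bar>\<^sup>2 \<le> (\<integral>t. \<bar>f t\<bar> * \<bar>g t\<bar> \<partial>N)\<^sup>2"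
    by (rule power_mono) simp
  moreover have "ennreal ((\<integral>t. \<bar>f t\<bar> * \<bar>g t\<bar> \<partial>N)\<^sup>2) \<le> ennreal (inner_L2 N f f * inner_L2 N g g)"
  proof -
    have "ennreal ((\<integral>t. \<bar>f t\<bar> * \<bar>g t\<bar> \<partial>N)\<^sup>2) = (\<integral>\<^sup>+t. ennreal \<bar>f t\<bar> * ennreal \<bar>g t\<bar> \<partial>N)\<^sup>2"
      using fg by (simp add: nn_integral_eq_integral ennreal_power ennreal_mult[symmetric])
    also have "\<dots> \<le> (\<integral>\<^sup>+t. ennreal \<bar>f t\<bar> ^ 2 \<partial>N) * (\<integral>\<^sup>+t. ennreal \<bar>g t\<bar> ^ 2 \<partial>N)"
      by (rule Cauchy_Schwarz_nn_integral) auto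
    also have "\<dots> = ennreal (inner_L2 N f f * inner_L2 N g g)"
      using nn[OF f] nn[OF g]
      by (simp add: ennreal_power inner_L2_def power2_eq_square ennreal_mult[symmetric])
    finally show ?thesis .
  qed
  ultimately show ?thesis
    using inner_L2_self_nonneg[of N f] inner_L2_self_nonneg[of N g] by simp
qed

lemma inner_L2_Cauchy_Schwarz_abs:
  assumes "square_integrable N f" "square_integrable N g"
  shows "\<bar>inner_L2 N f g\<bar> \<le> sqrt (inner_L2 N f f) * sqrt (inner_L2 N g g)"
  using real_sqrt_le_mono[OF inner_L2_Cauchy_Schwarz[OF assms]] by (simp add: real_sqrt_mult)

lemma (in finite_measure) integral_abs_le_sqrt_inner_L2:
  assumes "square_integrable M f"
  shows "(\<integral>t. \<bar>f t\<bar> \<partial>M) \<le> sqrt (measure M (space M)) * sqrt (inner_L2 M f f)"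
proof -
  have "square_integrable M (\<lambda>t. \<bar>f t\<bar>)"
    using assms by (auto simp: square_integrable_def)
  then have "\<bar>inner_L2 M (\<lambda>t. \<bar>f t\<bar>) (\<lambda>t. 1)\<bar>
      \<le> sqrt (inner_L2 M (\<lambda>t. \<bar>f t\<bar>) (\<lambda>t. \<bar>f t\<bar>)) * sqrt (inner_L2 M (\<lambda>t. 1) (\<lambda>t. 1))"
    by (intro inner_L2_Cauchy_Schwarz_abs square_integrable_const)
  then show ?thesis
    by (simp add: inner_L2_def mult.commute)
qed

definition L2_Cauchy :: "'a measure \<Rightarrow> (nat \<Rightarrow> 'a \<Rightarrow> real) \<Rightarrow> bool" where
  "L2_Cauchy N r \<longleftrightarrow>
     (\<forall>\<epsilon>>0. \<exists>k. \<forall>p\<ge>k. \<forall>q\<ge>k. inner_L2 N (\<lambda>t. r p t - r q t) (\<lambda>t. r p t - r q t) < \<epsilon>)"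

lemma (in finite_measure) L1_Cauchy_if_L2_Cauchy:
  assumes sq: "\<And>n. square_integrable M (r n)"
    and Cauchy: "L2_Cauchy M r" and "\<epsilon> > 0"
  shows "\<exists>k. \<forall>p\<ge>k. \<forall>q\<ge>k. (\<integral>t. norm (r p t - r q t) \<partial>M) < \<epsilon>"
proof -
  define c where "c = sqrt (measure M (space M)) + 1"
  have "c > 0"
    unfolding c_def by (intro add_nonneg_pos real_sqrt_ge_zero) simp_all
  with \<open>\<epsilon> > 0\<close> have "(\<epsilon> / c)\<^sup>2 > 0"
    by simp
  with Cauchy obtain k
    where k: "\<forall>p\<ge>k. \<forall>q\<ge>k. inner_L2 M (\<lambda>t. r p t - r q t) (\<lambda>t. r p t - r q t) < (\<epsilon> / c)\<^sup>2"
    unfolding L2_Cauchy_def by blast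
  have "(\<integral>t. norm (r p t - r q t) \<partial>M) < \<epsilon>" if "p \<ge> k" "q \<ge> k" for p q
  proof -
    define d where "d = sqrt (inner_L2 M (\<lambda>t. r p t - r q t) (\<lambda>t. r p t - r q t))"
    have "d < \<epsilon> / c"
      unfolding d_def using k that \<open>\<epsilon> > 0\<close> \<open>c > 0\<close> by (intro real_less_lsqrt) simp_all
    have "(\<integral>t. norm (r p t - r q t) \<partial>M) \<le> (c - 1) * d"
      using integral_abs_le_sqrt_inner_L2[OF square_integrable_diff[OF sq sq]] by (simp add: c_def d_def)
    also have "\<dots> \<le> c * d"
      by (simp add: d_def algebra_simps inner_L2_self_nonneg)
    also have "\<dots> < \<epsilon>"
      using \<open>d < \<epsilon> / c\<close> \<open>c > 0\<close> by (simp add: pos_less_divide_eq mult.commute)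
    finally show ?thesis .
  qed
  then show ?thesis
    by blast
qed

lemma square_integrable_AE_limit:
  fixes h :: "nat \<Rightarrow> 'a \<Rightarrow> real"
  assumes [measurable]: "\<And>j. h j \<in> borel_measurable N" "H \<in> borel_measurable N"
    and lim: "AE t in N. (\<lambda>j. h j t) \<longlonglongrightarrow> H t"
    and sq: "\<And>j. integrable N (\<lambda>t. (h j t)\<^sup>2)"
    and bound: "\<And>j. (\<integral>t. (h j t)\<^sup>2 \<partial>N) \<le> B"
  shows "integrable N (\<lambda>t. (H t)\<^sup>2)" "(\<integral>t. (H t)\<^sup>2 \<partial>N) \<le> B"
proof -
  have "0 \<le> (\<integral>t. (h 0 t)\<^sup>2 \<partial>N)"
    by (intro integral_nonneg_AE) simp
  with bound[of 0] have "0 \<le> B"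
    by linarith
  have "(\<integral>\<^sup>+t. ennreal ((H t)\<^sup>2) \<partial>N) = (\<integral>\<^sup>+t. liminf (\<lambda>j. ennreal ((h j t)\<^sup>2)) \<partial>N)"
  proof (rule nn_integral_cong_AE)
    show "AE t in N. ennreal ((H t)\<^sup>2) = liminf (\<lambda>j. ennreal ((h j t)\<^sup>2))"
      using lim
      by eventually_elim (rule lim_imp_Liminf[symmetric], simp, intro tendsto_ennrealI tendsto_power)
  qed
  also have "\<dots> \<le> liminf (\<lambda>j. \<integral>\<^sup>+t. ennreal ((h j t)\<^sup>2) \<partial>N)"
    by (rule nn_integral_liminf) simp
  also have "\<dots> = liminf (\<lambda>j. ennreal (\<integral>t. (h j t)\<^sup>2 \<partial>N))"
    using sq by (simp add: nn_integral_eq_integral)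
  also have "\<dots> \<le> ennreal B"
    using bound by (intro Liminf_le always_eventually allI ennreal_leI) simp_all
  finally have fin: "(\<integral>\<^sup>+t. ennreal ((H t)\<^sup>2) \<partial>N) \<le> ennreal B" .
  then show H: "integrable N (\<lambda>t. (H t)\<^sup>2)"
    using le_less_trans[OF fin ennreal_less_top] by (intro integrableI_bounded) simp_all
  show "(\<integral>t. (H t)\<^sup>2 \<partial>N) \<le> B"
    using fin \<open>0 \<le> B\<close> by (simp add: nn_integral_eq_integral[OF H])
qed

lemma (in finite_measure) square_integrable_Cauchy_limit:
  assumes sq: "\<And>n. square_integrable M (r n)"
    and Cauchy: "L2_Cauchy M r"
  obtains R where "square_integrable M R" "(\<lambda>n. inner_L2 M (\<lambda>t. R t - r n t) (\<lambda>t. R t - r n t)) \<longlonglongrightarrow> 0"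
proof -
  have [measurable]: "r n \<in> borel_measurable M" for n
    using sq by (simp add: square_integrable_def)
  have "integrable M (r n)" for n
    using sq[of n] unfolding square_integrable_def by (blast intro: square_integrable_imp_integrable)
  then obtain \<sigma> where \<sigma>: "strict_mono \<sigma>" "AE t in M. Cauchy (\<lambda>k. r (\<sigma> k) t)"
    using cauchy_L1_AE_cauchy_subseq[OF _ L1_Cauchy_if_L2_Cauchy[OF sq Cauchy]] by blast
  define R where "R t = lim (\<lambda>k. r (\<sigma> k) t)" for t
  have [measurable]: "R \<in> borel_measurable M"
    unfolding R_def by measurable
  have R_lim: "AE t in M. (\<lambda>k. r (\<sigma> k) t) \<longlonglongrightarrow> R t"
    using \<sigma>(2) by eventually_elim (simp add: R_def Cauchy_convergent_iff convergent_LIMSEQ_iff)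
  \<comment> \<open>Fatou's lemma along the subsequence \<open>\<sigma>\<close>\<close>
  have close: "integrable M (\<lambda>t. (R t - r n t)\<^sup>2) \<and> inner_L2 M (\<lambda>t. R t - r n t) (\<lambda>t. R t - r n t) \<le> \<epsilon>"
    if k: "\<forall>p\<ge>k. \<forall>q\<ge>k. inner_L2 M (\<lambda>t. r p t - r q t) (\<lambda>t. r p t - r q t) < \<epsilon>" and "n \<ge> k" for k n \<epsilon>
  proof -
    have "k \<le> \<sigma> (j + k)" for j
      using seq_suble[OF \<sigma>(1), of "j + k"] by simp
    then have "(\<integral>t. (r (\<sigma> (j + k)) t - r n t)\<^sup>2 \<partial>M) \<le> \<epsilon>" for j
      using k[rule_format, of "\<sigma> (j + k)" n] \<open>n \<ge> k\<close> by (simp add: inner_L2_def power2_eq_square)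
    moreover have "AE t in M. (\<lambda>j. r (\<sigma> (j + k)) t - r n t) \<longlonglongrightarrow> R t - r n t"
      using R_lim by eventually_elim (intro tendsto_diff tendsto_const LIMSEQ_ignore_initial_segment)
    ultimately show ?thesis
      using square_integrable_AE_limit[of "\<lambda>j t. r (\<sigma> (j + k)) t - r n t" M "\<lambda>t. R t - r n t" \<epsilon>]
        square_integrable_diff[OF sq sq]
      by (auto simp: square_integrable_def inner_L2_def power2_eq_square)
  qed
  obtain k where k: "\<forall>p\<ge>k. \<forall>q\<ge>k. inner_L2 M (\<lambda>t. r p t - r q t) (\<lambda>t. r p t - r q t) < 1"
    using Cauchy zero_less_one unfolding L2_Cauchy_def by blast
  have "square_integrable M (\<lambda>t. (R t - r k t) + r k t)"
    using close[OF k order_refl] sq by (intro square_integrable_add) (auto simp: square_integrable_def)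
  then have "square_integrable M R"
    by simp
  moreover have "(\<lambda>n. inner_L2 M (\<lambda>t. R t - r n t) (\<lambda>t. R t - r n t)) \<longlonglongrightarrow> 0"
  proof (rule LIMSEQ_I)
    fix \<epsilon> :: real assume "\<epsilon> > 0"
    then obtain k where k: "\<forall>p\<ge>k. \<forall>q\<ge>k. inner_L2 M (\<lambda>t. r p t - r q t) (\<lambda>t. r p t - r q t) < \<epsilon> / 2"
      using Cauchy half_gt_zero[OF \<open>\<epsilon> > 0\<close>] unfolding L2_Cauchy_def by blast
    have "norm (inner_L2 M (\<lambda>t. R t - r n t) (\<lambda>t. R t - r n t) - 0) < \<epsilon>" if "n \<ge> k" for n
      using close[OF k that] inner_L2_self_nonneg[of M "\<lambda>t. R t - r n t"] \<open>\<epsilon> > 0\<close> by simp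
    then show "\<exists>k. \<forall>n\<ge>k. norm (inner_L2 M (\<lambda>t. R t - r n t) (\<lambda>t. R t - r n t) - 0) < \<epsilon>"
      by blast
  qed
  ultimately show ?thesis
    using that by blast
qed

section \<open>Orthonormal systems and Parseval's identity\<close>

definition orthonormal_system :: "'a measure \<Rightarrow> (nat \<Rightarrow> 'a \<Rightarrow> real) \<Rightarrow> bool" where
  "orthonormal_system N \<psi> \<longleftrightarrow>
     (\<forall>i. square_integrable N (\<psi> i)) \<and> (\<forall>i j. inner_L2 N (\<psi> i) (\<psi> j) = (if i = j then 1 else 0))"

definition complete_orthonormal_system :: "'a measure \<Rightarrow> (nat \<Rightarrow> 'a \<Rightarrow> real) \<Rightarrow> bool" where
  "complete_orthonormal_system N \<psi> \<longleftrightarrow> orthonormal_system N \<psi> \<and>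
     (\<forall>h. square_integrable N h \<and> (\<forall>i. inner_L2 N h (\<psi> i) = 0) \<longrightarrow> (AE t in N. h t = 0))"

lemma square_integrable_combination:
  "orthonormal_system N \<psi> \<Longrightarrow> square_integrable N (\<lambda>t. \<Sum>i\<in>S. a i * \<psi> i t)"
  by (intro square_integrable_sum square_integrable_scale) (simp add: orthonormal_system_def)

lemma inner_L2_combination_left:
  assumes "orthonormal_system N \<psi>" "square_integrable N h"
  shows "inner_L2 N (\<lambda>t. \<Sum>i\<in>S. a i * \<psi> i t) h = (\<Sum>i\<in>S. a i * inner_L2 N (\<psi> i) h)"
  using assms
  by (simp add: inner_L2_sum_left square_integrable_scale inner_L2_scale_left orthonormal_system_def)

lemma inner_L2_combination_basis:
  assumes "orthonormal_system N \<psi>" "finite S"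
  shows "inner_L2 N (\<lambda>t. \<Sum>i\<in>S. a i * \<psi> i t) (\<psi> j) = (if j \<in> S then a j else 0)"
  using assms
  by (simp add: inner_L2_combination_left orthonormal_system_def if_distrib[of "\<lambda>x. _ * x"] cong: if_cong)

lemma inner_L2_combination_self:
  assumes "orthonormal_system N \<psi>" "finite S"
  shows "inner_L2 N (\<lambda>t. \<Sum>i\<in>S. a i * \<psi> i t) (\<lambda>t. \<Sum>i\<in>S. a i * \<psi> i t) = (\<Sum>i\<in>S. (a i)\<^sup>2)"
  using assms
  by (simp add: inner_L2_combination_left square_integrable_combination inner_L2_commute[of N "\<psi> _"]
      inner_L2_combination_basis power2_eq_square)

definition Fourier_sum :: "'a measure \<Rightarrow> (nat \<Rightarrow> 'a \<Rightarrow> real) \<Rightarrow> ('a \<Rightarrow> real) \<Rightarrow> nat \<Rightarrow> 'a \<Rightarrow> real" where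
  "Fourier_sum N \<psi> g p t = (\<Sum>i<p. inner_L2 N g (\<psi> i) * \<psi> i t)"

lemma square_integrable_Fourier_sum:
  "orthonormal_system N \<psi> \<Longrightarrow> square_integrable N (Fourier_sum N \<psi> g p)"
  unfolding Fourier_sum_def[abs_def] by (rule square_integrable_combination)

lemma inner_L2_Fourier_sum_left:
  "orthonormal_system N \<psi> \<Longrightarrow> square_integrable N h \<Longrightarrow>
     inner_L2 N (Fourier_sum N \<psi> g p) h = (\<Sum>i<p. inner_L2 N g (\<psi> i) * inner_L2 N (\<psi> i) h)"
  unfolding Fourier_sum_def[abs_def] by (rule inner_L2_combination_left)

lemma square_integrable_Fourier_remainder:
  "orthonormal_system N \<psi> \<Longrightarrow> square_integrable N g \<Longrightarrow>
     square_integrable N (\<lambda>t. g t - Fourier_sum N \<psi> g p t)"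
  by (intro square_integrable_diff square_integrable_Fourier_sum)

lemma inner_L2_Fourier_remainder_basis:
  assumes "orthonormal_system N \<psi>" "square_integrable N g" "i < p"
  shows "inner_L2 N (\<lambda>t. g t - Fourier_sum N \<psi> g p t) (\<psi> i) = 0"
proof -
  have "square_integrable N (\<psi> i)"
    using assms(1) by (simp add: orthonormal_system_def)
  then show ?thesis
    using assms inner_L2_combination_basis[OF assms(1), of "{..<p}" "\<lambda>j. inner_L2 N g (\<psi> j)" i]
    by (simp add: Fourier_sum_def inner_L2_diff_left square_integrable_combination)
qed

lemma Bessel_inequality:
  assumes \<psi>: "orthonormal_system N \<psi>" and g: "square_integrable N g"
  shows "(\<Sum>i<p. (inner_L2 N g (\<psi> i))\<^sup>2) \<le> inner_L2 N g g"
proof -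
  define r where "r = (\<lambda>t. g t - Fourier_sum N \<psi> g p t)"
  have r: "square_integrable N r"
    unfolding r_def using \<psi> g by (rule square_integrable_Fourier_remainder)
  have S: "square_integrable N (Fourier_sum N \<psi> g p)"
    using \<psi> by (rule square_integrable_Fourier_sum)
  have r_left: "inner_L2 N r h = inner_L2 N g h - inner_L2 N (Fourier_sum N \<psi> g p) h"
    if "square_integrable N h" for h
    unfolding r_def by (rule inner_L2_diff_left[OF g S that])
  have "inner_L2 N r (\<psi> i) = 0" if "i < p" for i
    unfolding r_def by (rule inner_L2_Fourier_remainder_basis[OF \<psi> g that])
  then have "inner_L2 N (Fourier_sum N \<psi> g p) r = 0"
    using \<psi> r by (simp add: inner_L2_Fourier_sum_left inner_L2_commute[of N "\<psi> _"])
  then have "inner_L2 N r r = inner_L2 N r g"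
    using r_left[OF r] by (simp add: inner_L2_commute[of N g])
  also have "\<dots> = inner_L2 N g g - (\<Sum>i<p. (inner_L2 N g (\<psi> i))\<^sup>2)"
    using \<psi> g r_left[OF g]
    by (simp add: inner_L2_Fourier_sum_left inner_L2_commute[of N "\<psi> _"] power2_eq_square)
  finally show ?thesis
    using inner_L2_self_nonneg[of N r] by simp
qed

lemma Fourier_sum_Cauchy:
  assumes \<psi>: "orthonormal_system N \<psi>" and g: "square_integrable N g"
  shows "L2_Cauchy N (Fourier_sum N \<psi> g)"
  unfolding L2_Cauchy_def
proof (intro allI impI)
  fix \<epsilon> :: real assume "\<epsilon> > 0"
  define c where "c i = inner_L2 N g (\<psi> i)" for i
  have "summable (\<lambda>i. (c i)\<^sup>2)"
    using Bessel_inequality[OF \<psi> g] unfolding c_def by (intro summableI_nonneg_bounded) auto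
  then obtain k where k: "\<forall>p\<ge>k. \<forall>q. (\<Sum>i\<in>{p..<q}. (c i)\<^sup>2) < \<epsilon>"
    using \<open>\<epsilon> > 0\<close> unfolding summable_Cauchy by (auto simp: sum_nonneg)
  have dist: "inner_L2 N (\<lambda>t. Fourier_sum N \<psi> g q t - Fourier_sum N \<psi> g p t)
                (\<lambda>t. Fourier_sum N \<psi> g q t - Fourier_sum N \<psi> g p t) = (\<Sum>i\<in>{p..<q}. (c i)\<^sup>2)"
    if "p \<le> q" for p q
  proof -
    have "{..<q} = {..<p} \<union> {p..<q}" "{..<p} \<inter> {p..<q} = {}"
      using that by auto
    then have "Fourier_sum N \<psi> g q t - Fourier_sum N \<psi> g p t = (\<Sum>i\<in>{p..<q}. c i * \<psi> i t)" for t
      by (simp add: Fourier_sum_def c_def sum.union_disjoint)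
    then show ?thesis
      using inner_L2_combination_self[OF \<psi>] by simp
  qed
  have "inner_L2 N (\<lambda>t. Fourier_sum N \<psi> g p t - Fourier_sum N \<psi> g q t)
          (\<lambda>t. Fourier_sum N \<psi> g p t - Fourier_sum N \<psi> g q t) < \<epsilon>" if "p \<ge> k" "q \<ge> k" for p q
  proof (cases "p \<le> q")
    case True
    have "inner_L2 N (\<lambda>t. Fourier_sum N \<psi> g p t - Fourier_sum N \<psi> g q t)
            (\<lambda>t. Fourier_sum N \<psi> g p t - Fourier_sum N \<psi> g q t)
        = inner_L2 N (\<lambda>t. Fourier_sum N \<psi> g q t - Fourier_sum N \<psi> g p t)
            (\<lambda>t. Fourier_sum N \<psi> g q t - Fourier_sum N \<psi> g p t)"
      by (simp add: inner_L2_def algebra_simps)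
    then show ?thesis
      using dist[OF True] k that by simp
  next
    case False
    then show ?thesis
      using dist[of q p] k that by simp
  qed
  then show "\<exists>k. \<forall>p\<ge>k. \<forall>q\<ge>k. inner_L2 N (\<lambda>t. Fourier_sum N \<psi> g p t - Fourier_sum N \<psi> g q t)
      (\<lambda>t. Fourier_sum N \<psi> g p t - Fourier_sum N \<psi> g q t) < \<epsilon>"
    by blast
qed

lemma (in finite_measure) Fourier_remainder_tendsto_0:
  assumes \<psi>: "complete_orthonormal_system M \<psi>" and g: "square_integrable M g"
  shows "(\<lambda>p. inner_L2 M (\<lambda>t. g t - Fourier_sum M \<psi> g p t) (\<lambda>t. g t - Fourier_sum M \<psi> g p t)) \<longlonglongrightarrow> 0"
proof -
  have ons: "orthonormal_system M \<psi>"
    using \<psi> by (simp add: complete_orthonormal_system_def)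
  define S where "S = Fourier_sum M \<psi> g"
  have S: "square_integrable M (S p)" for p
    unfolding S_def using ons by (rule square_integrable_Fourier_sum)
  obtain G where G: "square_integrable M G"
    and G_lim: "(\<lambda>p. inner_L2 M (\<lambda>t. G t - S p t) (\<lambda>t. G t - S p t)) \<longlonglongrightarrow> 0"
    using square_integrable_Cauchy_limit[OF S Fourier_sum_Cauchy[OF ons g, folded S_def]] by blast
  have "inner_L2 M (\<lambda>t. g t - G t) (\<psi> i) = 0" for i
  proof -
    have \<psi>i: "square_integrable M (\<psi> i)" "inner_L2 M (\<psi> i) (\<psi> i) = 1"
      using ons by (simp_all add: orthonormal_system_def)
    have "\<bar>inner_L2 M (\<lambda>t. g t - G t) (\<psi> i)\<bar> \<le> sqrt (inner_L2 M (\<lambda>t. G t - S p t) (\<lambda>t. G t - S p t))"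
      if "i < p" for p
    proof -
      have "inner_L2 M (\<lambda>t. g t - S p t) (\<psi> i) = 0"
        unfolding S_def using ons g that by (rule inner_L2_Fourier_remainder_basis)
      then have "inner_L2 M (\<lambda>t. g t - G t) (\<psi> i) = - inner_L2 M (\<lambda>t. G t - S p t) (\<psi> i)"
        using inner_L2_diff_left[OF g G \<psi>i(1)] inner_L2_diff_left[OF g S \<psi>i(1)]
          inner_L2_diff_left[OF G S \<psi>i(1)]
        by simp
      then show ?thesis
        using inner_L2_Cauchy_Schwarz_abs[OF square_integrable_diff[OF G S] \<psi>i(1)] \<psi>i(2) by simp
    qed
    then have "\<bar>inner_L2 M (\<lambda>t. g t - G t) (\<psi> i)\<bar> \<le> 0"
      using tendsto_real_sqrt[OF G_lim]
      by (intro tendsto_lowerbound[where F=sequentially]) (auto simp: eventually_at_top_dense)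
    then show ?thesis
      by simp
  qed
  then have "AE t in M. g t - G t = 0"
    using \<psi> square_integrable_diff[OF g G] unfolding complete_orthonormal_system_def by blast
  moreover have [measurable]: "g \<in> borel_measurable M" "G \<in> borel_measurable M"
    "S p \<in> borel_measurable M" for p
    using g G S by (simp_all add: square_integrable_def)
  ultimately have "inner_L2 M (\<lambda>t. g t - S p t) (\<lambda>t. g t - S p t)
      = inner_L2 M (\<lambda>t. G t - S p t) (\<lambda>t. G t - S p t)"
    for p
    unfolding inner_L2_def by (intro integral_cong_AE) (measurable, auto)
  with G_lim show ?thesis
    by (simp add: S_def)
qed

lemma (in finite_measure) Parseval_identity:
  assumes \<psi>: "complete_orthonormal_system M \<psi>"
    and f: "square_integrable M f" and g: "square_integrable M g"
  shows "(\<lambda>p. \<Sum>i<p. inner_L2 M g (\<psi> i) * inner_L2 M f (\<psi> i)) \<longlonglongrightarrow> inner_L2 M f g"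
proof -
  have ons: "orthonormal_system M \<psi>"
    using \<psi> by (simp add: complete_orthonormal_system_def)
  define r where "r p = (\<lambda>t. g t - Fourier_sum M \<psi> g p t)" for p
  have r: "square_integrable M (r p)" for p
    unfolding r_def using ons g by (rule square_integrable_Fourier_remainder)
  have partial_sum: "(\<Sum>i<p. inner_L2 M g (\<psi> i) * inner_L2 M f (\<psi> i)) = inner_L2 M f g - inner_L2 M (r p) f"
    for p
  proof -
    have "inner_L2 M (r p) f = inner_L2 M g f - inner_L2 M (Fourier_sum M \<psi> g p) f"
      unfolding r_def using g square_integrable_Fourier_sum[OF ons] f by (rule inner_L2_diff_left)
    then show ?thesis
      using inner_L2_Fourier_sum_left[OF ons f, of g p]
      by (simp add: inner_L2_commute[of M "\<psi> _" f] inner_L2_commute[of M g f])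
  qed
  have "(\<lambda>p. inner_L2 M (r p) f) \<longlonglongrightarrow> 0"
  proof (rule Lim_null_comparison)
    show "\<forall>\<^sub>F p in sequentially.
        norm (inner_L2 M (r p) f) \<le> sqrt (inner_L2 M (r p) (r p)) * sqrt (inner_L2 M f f)"
      using inner_L2_Cauchy_Schwarz_abs[OF r f] by simp
    show "(\<lambda>p. sqrt (inner_L2 M (r p) (r p)) * sqrt (inner_L2 M f f)) \<longlonglongrightarrow> 0"
      using Fourier_remainder_tendsto_0[OF \<psi> g, folded r_def]
      by (intro tendsto_mult_left_zero) (simp add: tendsto_real_sqrt[where x=0, simplified])
  qed
  then have "(\<lambda>p. inner_L2 M f g - inner_L2 M (r p) f) \<longlonglongrightarrow> inner_L2 M f g - 0"
    by (intro tendsto_diff tendsto_const)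
  then show ?thesis
    by (simp add: partial_sum)
qed

section \<open>Image measures of signed densities\<close>

lemma integrable_scaleR_bounded:
  fixes f :: "'a \<Rightarrow> real" and k :: "'a \<Rightarrow> 'b::{banach, second_countable_topology}"
  assumes "integrable M f" "k \<in> borel_measurable M" "\<And>\<omega>. norm (k \<omega>) \<le> K"
  shows "integrable M (\<lambda>\<omega>. f \<omega> *\<^sub>R k \<omega>)"
proof (rule Bochner_Integration.integrable_bound)
  show "integrable M (\<lambda>\<omega>. K * f \<omega>)"
    using assms by simp
  show "(\<lambda>\<omega>. f \<omega> *\<^sub>R k \<omega>) \<in> borel_measurable M"
    using assms by simp
  have "0 \<le> K"
    using assms(3) norm_ge_zero order_trans by blast
  then show "AE \<omega> in M. norm (f \<omega> *\<^sub>R k \<omega>) \<le> norm (K * f \<omega>)"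
    using assms(3) by (intro AE_I2) (simp add: abs_mult mult.commute[of "\<bar>f _\<bar>"] mult_right_mono)
qed

lemma integrable_mult_bounded:
  fixes w k :: "'a \<Rightarrow> complex"
  assumes "integrable M w" "k \<in> borel_measurable M" "\<And>\<omega>. norm (k \<omega>) \<le> K"
  shows "integrable M (\<lambda>\<omega>. w \<omega> * k \<omega>)"
proof (rule Bochner_Integration.integrable_bound)
  show "integrable M (\<lambda>\<omega>. K * norm (w \<omega>))"
    using assms by simp
  show "(\<lambda>\<omega>. w \<omega> * k \<omega>) \<in> borel_measurable M"
    using assms by simp
  have "0 \<le> K"
    using assms(3) norm_ge_zero order_trans by blast
  then show "AE \<omega> in M. norm (w \<omega> * k \<omega>) \<le> norm (K * norm (w \<omega>))"
    using assms(3)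
    by (intro AE_I2) (simp add: norm_mult abs_mult mult.commute[of "cmod (w _)"] mult_right_mono)
qed

definition distr_pos_part :: "'a measure \<Rightarrow> ('a \<Rightarrow> real) \<Rightarrow> ('a \<Rightarrow> real) \<Rightarrow> real measure" where
  "distr_pos_part M f Z = distr (density M (\<lambda>\<omega>. max (f \<omega>) 0)) borel Z"

lemma integral_distr_pos_part:
  fixes f Z :: "'a \<Rightarrow> real" and h :: "real \<Rightarrow> 'b::{banach, second_countable_topology}"
  assumes [measurable]: "f \<in> borel_measurable M" "Z \<in> borel_measurable M" "h \<in> borel_measurable borel"
  shows "integral\<^sup>L (distr_pos_part M f Z) h = (\<integral>\<omega>. max (f \<omega>) 0 *\<^sub>R h (Z \<omega>) \<partial>M)"
proof -
  have "(\<lambda>\<omega>. max (f \<omega>) 0) \<in> borel_measurable M"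
    by measurable
  then show ?thesis
    unfolding distr_pos_part_def using integral_density[where g="\<lambda>\<omega>. max (f \<omega>) 0" and f="\<lambda>\<omega>. h (Z \<omega>)"]
    by (simp add: integral_distr)
qed

lemma emeasure_distr_pos_part_UNIV:
  assumes f: "integrable M f" and [measurable]: "Z \<in> borel_measurable M"
  shows "emeasure (distr_pos_part M f Z) UNIV = ennreal (\<integral>\<omega>. max (f \<omega>) 0 \<partial>M)"
proof -
  have [measurable]: "f \<in> borel_measurable M"
    using f by simp
  have "emeasure (distr_pos_part M f Z) UNIV = emeasure (density M (\<lambda>\<omega>. max (f \<omega>) 0)) (space M)"
    unfolding distr_pos_part_def by (subst emeasure_distr) simp_all
  also have "\<dots> = (\<integral>\<^sup>+\<omega>. ennreal (max (f \<omega>) 0) \<partial>M)"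
    by (subst emeasure_density) (auto intro!: nn_integral_cong)
  also have "\<dots> = ennreal (\<integral>\<omega>. max (f \<omega>) 0 \<partial>M)"
    using f by (intro nn_integral_eq_integral) auto
  finally show ?thesis .
qed

lemma finite_borel_measure_distr_pos_part:
  assumes "integrable M f" "Z \<in> borel_measurable M"
  shows "finite_borel_measure (distr_pos_part M f Z)"
proof -
  have "finite_measure (distr_pos_part M f Z)"
    using emeasure_distr_pos_part_UNIV[OF assms]
    by (intro finite_measureI) (simp add: distr_pos_part_def)
  then show ?thesis
    by (simp add: finite_borel_measure_def finite_borel_measure_axioms_def distr_pos_part_def)
qed

lemma real_distribution_distr_pos_part:
  assumes "integrable M f" "Z \<in> borel_measurable M" "(\<integral>\<omega>. max (f \<omega>) 0 \<partial>M) = 1"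
  shows "real_distribution (distr_pos_part M f Z)"
proof -
  have "prob_space (distr_pos_part M f Z)"
    using emeasure_distr_pos_part_UNIV[OF assms(1,2)] assms(3)
    by (intro prob_spaceI) (simp add: distr_pos_part_def)
  then show ?thesis
    by (simp add: real_distribution_def real_distribution_axioms_def distr_pos_part_def)
qed

lemma integral_eq_0_if_distr_pos_part_eq:
  fixes f Z :: "'a \<Rightarrow> real" and h :: "real \<Rightarrow> 'b::{banach, second_countable_topology}"
  assumes f: "integrable M f" and [measurable]: "Z \<in> borel_measurable M" "h \<in> borel_measurable borel"
    and bounded: "\<And>y. norm (h y) \<le> K"
    and eq: "distr_pos_part M f Z = distr_pos_part M (\<lambda>\<omega>. - f \<omega>) Z"
  shows "(\<integral>\<omega>. f \<omega> *\<^sub>R h (Z \<omega>) \<partial>M) = 0"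
proof -
  have [measurable]: "f \<in> borel_measurable M"
    using f by simp
  have "(\<integral>\<omega>. f \<omega> *\<^sub>R h (Z \<omega>) \<partial>M)
      = (\<integral>\<omega>. max (f \<omega>) 0 *\<^sub>R h (Z \<omega>) - max (- f \<omega>) 0 *\<^sub>R h (Z \<omega>) \<partial>M)"
    by (intro Bochner_Integration.integral_cong refl) (simp add: max_def flip: scaleR_diff_left)
  also have "\<dots> = integral\<^sup>L (distr_pos_part M f Z) h - integral\<^sup>L (distr_pos_part M (\<lambda>\<omega>. - f \<omega>) Z) h"
  proof -
    have "integrable M (\<lambda>\<omega>. max (s * f \<omega>) 0 *\<^sub>R h (Z \<omega>))" for s
      using f bounded by (intro integrable_scaleR_bounded) auto
    from this[of 1] this[of "-1"] show ?thesis
      by (simp add: integral_distr_pos_part)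
  qed
  finally show ?thesis
    using eq by simp
qed

lemma cdf_distr_pos_part:
  assumes f: "integrable M f" and [measurable]: "Z \<in> borel_measurable M"
  shows "cdf (distr_pos_part M f Z) x = (\<integral>\<omega>. max (f \<omega>) 0 * indicator {..x} (Z \<omega>) \<partial>M)"
proof -
  interpret finite_borel_measure "distr_pos_part M f Z"
    using assms by (rule finite_borel_measure_distr_pos_part)
  have [measurable]: "f \<in> borel_measurable M"
    using f by simp
  show ?thesis
    using integral_distr_pos_part[of f M Z "indicator {..x} :: real \<Rightarrow> real"]
    by (simp add: cdf_def emeasure_eq_measure distr_pos_part_def)
qed

lemma distr_pos_part_eq_if_halfline_integrals_eq_0:
  fixes f Z :: "'a \<Rightarrow> real"
  assumes f: "integrable M f" and [measurable]: "Z \<in> borel_measurable M"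
    and halflines: "\<And>x. (\<integral>\<omega>. f \<omega> * indicator {\<omega>\<in>space M. Z \<omega> \<le> x} \<omega> \<partial>M) = 0"
  shows "distr_pos_part M f Z = distr_pos_part M (\<lambda>\<omega>. - f \<omega>) Z"
proof (rule cdf_unique')
  show "finite_borel_measure (distr_pos_part M f Z)"
    "finite_borel_measure (distr_pos_part M (\<lambda>\<omega>. - f \<omega>) Z)"
    using f by (simp_all add: finite_borel_measure_distr_pos_part)
  show "cdf (distr_pos_part M f Z) = cdf (distr_pos_part M (\<lambda>\<omega>. - f \<omega>) Z)"
  proof
    fix x
    have int: "integrable M (\<lambda>\<omega>. max (s * f \<omega>) 0 * indicator {..x} (Z \<omega>))" for s
      using integrable_scaleR_bounded[of M "\<lambda>\<omega>. max (s * f \<omega>) 0" "\<lambda>\<omega>. indicator {..x} (Z \<omega>) :: real" 1] f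
      by simp
    have "cdf (distr_pos_part M f Z) x - cdf (distr_pos_part M (\<lambda>\<omega>. - f \<omega>) Z) x
        = (\<integral>\<omega>. max (f \<omega>) 0 * indicator {..x} (Z \<omega>) - max (- f \<omega>) 0 * indicator {..x} (Z \<omega>) \<partial>M)"
      using int[of 1] int[of "-1"] f by (simp add: cdf_distr_pos_part)
    also have "\<dots> = (\<integral>\<omega>. f \<omega> * indicator {\<omega>\<in>space M. Z \<omega> \<le> x} \<omega> \<partial>M)"
      by (intro Bochner_Integration.integral_cong refl) (auto simp: indicator_def max_def)
    finally show "cdf (distr_pos_part M f Z) x = cdf (distr_pos_part M (\<lambda>\<omega>. - f \<omega>) Z) x"
      using halflines[of x] by simp
  qed
qed

lemma integral_eq_0_if_halfline_integrals_eq_0: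
  fixes f Z :: "'a \<Rightarrow> real" and h :: "real \<Rightarrow> 'b::{banach, second_countable_topology}"
  assumes f: "integrable M f" and Z: "Z \<in> borel_measurable M" and h: "h \<in> borel_measurable borel"
    and bounded: "\<And>y. norm (h y) \<le> K"
    and halflines: "\<And>x. (\<integral>\<omega>. f \<omega> * indicator {\<omega>\<in>space M. Z \<omega> \<le> x} \<omega> \<partial>M) = 0"
  shows "(\<integral>\<omega>. f \<omega> *\<^sub>R h (Z \<omega>) \<partial>M) = 0"
  using f Z h bounded distr_pos_part_eq_if_halfline_integrals_eq_0[OF f Z halflines]
  by (rule integral_eq_0_if_distr_pos_part_eq)

lemma borel_measurable_iexp [measurable]: "(\<lambda>x. iexp (\<tau> * x)) \<in> borel_measurable borel"
  by (intro borel_measurable_continuous_onI continuous_intros)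

lemma integral_neg_part_eq_pos_part:
  fixes f :: "'a \<Rightarrow> real"
  assumes "integrable M f" "(\<integral>\<omega>. f \<omega> \<partial>M) = 0"
  shows "(\<integral>\<omega>. max (- f \<omega>) 0 \<partial>M) = (\<integral>\<omega>. max (f \<omega>) 0 \<partial>M)"
proof -
  have "integrable M (\<lambda>\<omega>. max (f \<omega>) 0)" "integrable M (\<lambda>\<omega>. max (- f \<omega>) 0)"
    using assms(1) by (simp_all add: integrable_max)
  moreover have "(\<integral>\<omega>. f \<omega> \<partial>M) = (\<integral>\<omega>. max (f \<omega>) 0 - max (- f \<omega>) 0 \<partial>M)"
    by (intro Bochner_Integration.integral_cong) (auto simp: max_def)
  ultimately show ?thesis
    using assms(2) by simp
qed

lemma distr_pos_part_eq_if_char_eq_0: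
  fixes f Z :: "'a \<Rightarrow> real"
  assumes f: "integrable M f" and Z[measurable]: "Z \<in> borel_measurable M"
    and mass: "(\<integral>\<omega>. max (f \<omega>) 0 \<partial>M) = 1"
    and char: "\<And>\<tau>. (\<integral>\<omega>. f \<omega> *\<^sub>R iexp (\<tau> * Z \<omega>) \<partial>M) = 0"
  shows "distr_pos_part M f Z = distr_pos_part M (\<lambda>\<omega>. - f \<omega>) Z"
proof (rule Levy_uniqueness)
  have f_meas[measurable]: "f \<in> borel_measurable M"
    using f by simp
  have int: "integrable M (\<lambda>\<omega>. max (s * f \<omega>) 0 *\<^sub>R iexp (\<tau> * Z \<omega>))" for s \<tau>
  proof (rule integrable_scaleR_bounded[where K=1])
    show "integrable M (\<lambda>\<omega>. max (s * f \<omega>) 0)"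
      using integrable_max[OF integrable_mult_right[OF f, of s], of "\<lambda>_. 0"] by simp
    show "(\<lambda>\<omega>. iexp (\<tau> * Z \<omega>)) \<in> borel_measurable M"
      by measurable
  qed simp
  have char_pos_neg: "char (distr_pos_part M f Z) \<tau> - char (distr_pos_part M (\<lambda>\<omega>. - f \<omega>) Z) \<tau>
      = (\<integral>\<omega>. f \<omega> *\<^sub>R iexp (\<tau> * Z \<omega>) \<partial>M)" for \<tau>
  proof -
    have "char (distr_pos_part M f Z) \<tau> - char (distr_pos_part M (\<lambda>\<omega>. - f \<omega>) Z) \<tau>
        = (\<integral>\<omega>. max (f \<omega>) 0 *\<^sub>R iexp (\<tau> * Z \<omega>) - max (- f \<omega>) 0 *\<^sub>R iexp (\<tau> * Z \<omega>) \<partial>M)"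
      using int[of 1 \<tau>] int[of "-1" \<tau>]
        integral_distr_pos_part[OF f_meas Z borel_measurable_iexp]
        integral_distr_pos_part[OF borel_measurable_uminus[OF f_meas] Z borel_measurable_iexp]
      by (simp add: char_def)
    also have "\<dots> = (\<integral>\<omega>. f \<omega> *\<^sub>R iexp (\<tau> * Z \<omega>) \<partial>M)"
      by (intro Bochner_Integration.integral_cong refl) (simp add: max_def flip: scaleR_diff_left)
    finally show ?thesis .
  qed
  show "char (distr_pos_part M f Z) = char (distr_pos_part M (\<lambda>\<omega>. - f \<omega>) Z)"
  proof
    fix \<tau>
    show "char (distr_pos_part M f Z) \<tau> = char (distr_pos_part M (\<lambda>\<omega>. - f \<omega>) Z) \<tau>"
      using char_pos_neg[of \<tau>] char[of \<tau>] by simp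
  qed
  have "complex_of_real (\<integral>\<omega>. f \<omega> \<partial>M) = 0"
    using char[of 0] by (simp add: scaleR_conv_of_real)
  then have "(\<integral>\<omega>. max (- f \<omega>) 0 \<partial>M) = 1"
    using f mass by (simp add: integral_neg_part_eq_pos_part)
  with f mass show "real_distribution (distr_pos_part M f Z)"
    "real_distribution (distr_pos_part M (\<lambda>\<omega>. - f \<omega>) Z)"
    by (simp_all add: real_distribution_distr_pos_part)
qed

lemma integral_eq_0_if_char_eq_0:
  fixes f Z :: "'a \<Rightarrow> real" and h :: "real \<Rightarrow> 'b::{banach, second_countable_topology}"
  assumes f: "integrable M f" and Z[measurable]: "Z \<in> borel_measurable M"
    and h[measurable]: "h \<in> borel_measurable borel" and bounded: "\<And>y. norm (h y) \<le> K"
    and char: "\<And>\<tau>. (\<integral>\<omega>. f \<omega> *\<^sub>R iexp (\<tau> * Z \<omega>) \<partial>M) = 0"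
  shows "(\<integral>\<omega>. f \<omega> *\<^sub>R h (Z \<omega>) \<partial>M) = 0"
proof -
  have [measurable]: "f \<in> borel_measurable M"
    using f by simp
  define m where "m = (\<integral>\<omega>. max (f \<omega>) 0 \<partial>M)"
  have "complex_of_real (\<integral>\<omega>. f \<omega> \<partial>M) = 0"
    using char[of 0] by (simp add: scaleR_conv_of_real)
  then have m_neg: "(\<integral>\<omega>. max (- f \<omega>) 0 \<partial>M) = m"
    unfolding m_def using f by (simp add: integral_neg_part_eq_pos_part)
  have "0 \<le> m"
    unfolding m_def by (intro integral_nonneg_AE) simp
  then consider "m = 0" | "m > 0"
    by linarith
  then show ?thesis
  proof cases
    case 1
    then have "(\<integral>\<omega>. max (f \<omega>) 0 \<partial>M) = 0" "(\<integral>\<omega>. max (- f \<omega>) 0 \<partial>M) = 0"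
      using m_neg by (simp_all add: m_def)
    then have "AE \<omega> in M. max (f \<omega>) 0 = 0" "AE \<omega> in M. max (- f \<omega>) 0 = 0"
      using f by (simp_all add: integral_nonneg_eq_0_iff_AE)
    then have "AE \<omega> in M. f \<omega> *\<^sub>R h (Z \<omega>) = 0"
      by eventually_elim (simp add: max_def split: if_splits)
    then show ?thesis
      by (simp add: integral_eq_zero_AE)
  next
    case 2
    \<comment> \<open>Divided by their common mass \<open>m\<close>, the positive and negative parts of \<open>f\<close> induce
      probability distributions of \<open>Z\<close> with the same characteristic function.\<close>
    have g: "integrable M (\<lambda>\<omega>. f \<omega> / m)"
      using f by simp
    have "max (f \<omega> / m) 0 = max (f \<omega>) 0 / m" for \<omega>
      using 2 by (auto simp: max_def divide_le_0_iff zero_le_divide_iff)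
    then have mass: "(\<integral>\<omega>. max (f \<omega> / m) 0 \<partial>M) = 1"
      using 2 by (simp add: m_def)
    have "(\<integral>\<omega>. (f \<omega> / m) *\<^sub>R iexp (\<tau> * Z \<omega>) \<partial>M) = (1 / m) *\<^sub>R (\<integral>\<omega>. f \<omega> *\<^sub>R iexp (\<tau> * Z \<omega>) \<partial>M)" for \<tau>
      by (subst integral_scaleR_right[symmetric]) simp
    then have "distr_pos_part M (\<lambda>\<omega>. f \<omega> / m) Z = distr_pos_part M (\<lambda>\<omega>. - (f \<omega> / m)) Z"
      using char by (intro distr_pos_part_eq_if_char_eq_0[OF g Z mass]) simp
    then have "(\<integral>\<omega>. (f \<omega> / m) *\<^sub>R h (Z \<omega>) \<partial>M) = 0"
      by (rule integral_eq_0_if_distr_pos_part_eq[OF g Z h bounded])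
    moreover have "(\<integral>\<omega>. (f \<omega> / m) *\<^sub>R h (Z \<omega>) \<partial>M) = (1 / m) *\<^sub>R (\<integral>\<omega>. f \<omega> *\<^sub>R h (Z \<omega>) \<partial>M)"
      by (subst integral_scaleR_right[symmetric]) simp
    ultimately show ?thesis
      using 2 by simp
  qed
qed

lemma integral_complex_eq_0_if_char_eq_0:
  fixes w :: "'a \<Rightarrow> complex" and Z :: "'a \<Rightarrow> real" and h :: "real \<Rightarrow> complex"
  assumes w: "integrable M w" and [measurable]: "Z \<in> borel_measurable M" "h \<in> borel_measurable borel"
    and bounded: "\<And>y. norm (h y) \<le> K"
    and char: "\<And>\<tau>. (\<integral>\<omega>. w \<omega> * iexp (\<tau> * Z \<omega>) \<partial>M) = 0"
  shows "(\<integral>\<omega>. w \<omega> * h (Z \<omega>) \<partial>M) = 0"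
proof -
  have Re_part: "(\<integral>\<omega>. Re (v \<omega>) *\<^sub>R h (Z \<omega>) \<partial>M) = 0"
    if v: "integrable M v" and char_v: "\<And>\<tau>. (\<integral>\<omega>. v \<omega> * iexp (\<tau> * Z \<omega>) \<partial>M) = 0" for v
  proof (rule integral_eq_0_if_char_eq_0[OF _ _ _ bounded])
    fix \<tau>
    have int: "integrable M (\<lambda>\<omega>. v \<omega> * iexp (t * Z \<omega>))" for t
      using v by (intro integrable_mult_bounded[where K=1]) auto
    have pointwise: "Re (v \<omega>) *\<^sub>R iexp (\<tau> * Z \<omega>)
        = (v \<omega> * iexp (\<tau> * Z \<omega>) + cnj (v \<omega> * iexp (- \<tau> * Z \<omega>))) / 2" for \<omega>
    proof -
      have "cnj (v \<omega> * iexp (- \<tau> * Z \<omega>)) = cnj (v \<omega>) * iexp (\<tau> * Z \<omega>)"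
        by (simp add: exp_cnj)
      then show ?thesis
        by (simp add: complex_eq_iff algebra_simps)
    qed
    have "(\<integral>\<omega>. Re (v \<omega>) *\<^sub>R iexp (\<tau> * Z \<omega>) \<partial>M)
        = (\<integral>\<omega>. (v \<omega> * iexp (\<tau> * Z \<omega>) + cnj (v \<omega> * iexp (- \<tau> * Z \<omega>))) / 2 \<partial>M)"
      by (intro Bochner_Integration.integral_cong refl pointwise)
    also have "\<dots> = ((\<integral>\<omega>. v \<omega> * iexp (\<tau> * Z \<omega>) \<partial>M) + cnj (\<integral>\<omega>. v \<omega> * iexp (- \<tau> * Z \<omega>) \<partial>M)) / 2"
      unfolding integral_divide_zero Bochner_Integration.integral_add[OF int integrable_cnj[OF int]]
        Bochner_Integration.integral_cnj ..
    finally show "(\<integral>\<omega>. Re (v \<omega>) *\<^sub>R iexp (\<tau> * Z \<omega>) \<partial>M) = 0"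
      using char_v[of \<tau>] char_v[of "- \<tau>"] by simp
  qed (use v in simp_all)
  \<comment> \<open>\<open>Im w = Re (- \<i> * w)\<close>, and \<open>- \<i> * w\<close> satisfies the hypothesis as well.\<close>
  have Im_0: "(\<integral>\<omega>. Re (- \<i> * w \<omega>) *\<^sub>R h (Z \<omega>) \<partial>M) = 0"
    using w char by (intro Re_part) (simp_all add: mult.assoc)
  have Re_0: "(\<integral>\<omega>. Re (w \<omega>) *\<^sub>R h (Z \<omega>) \<partial>M) = 0"
    using w char by (rule Re_part)
  have int_Re: "integrable M (\<lambda>\<omega>. Re (w \<omega>) *\<^sub>R h (Z \<omega>))"
    and int_Im: "integrable M (\<lambda>\<omega>. Re (- \<i> * w \<omega>) *\<^sub>R h (Z \<omega>))"
    using w bounded by (auto intro!: integrable_scaleR_bounded)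
  have "(\<integral>\<omega>. w \<omega> * h (Z \<omega>) \<partial>M)
      = (\<integral>\<omega>. Re (w \<omega>) *\<^sub>R h (Z \<omega>) + \<i> * (Re (- \<i> * w \<omega>) *\<^sub>R h (Z \<omega>)) \<partial>M)"
    by (intro Bochner_Integration.integral_cong refl) (simp add: complex_eq_iff)
  also have "\<dots> = (\<integral>\<omega>. Re (w \<omega>) *\<^sub>R h (Z \<omega>) \<partial>M) + \<i> * (\<integral>\<omega>. Re (- \<i> * w \<omega>) *\<^sub>R h (Z \<omega>) \<partial>M)"
    unfolding Bochner_Integration.integral_add[OF int_Re integrable_mult_right[OF int_Im]]
      integral_mult_right_zero ..
  finally show ?thesis
    using Re_0 Im_0 by simp
qed

section \<open>Lower orthants and conditional expectations\<close>

lemma halfspace_integral_eq_0_if_normalized: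
  fixes e :: "'a \<Rightarrow> real" and Y :: "nat \<Rightarrow> 'a \<Rightarrow> real"
  assumes e0: "(\<integral>\<omega>. e \<omega> \<partial>M) = 0"
    and normalized: "\<And>p \<gamma> x. p \<ge> 1 \<Longrightarrow> (\<Sum>i<p. (\<gamma> i)\<^sup>2) = 1 \<Longrightarrow>
        (\<integral>\<omega>. e \<omega> * indicator {\<omega>\<in>space M. (\<Sum>i<p. \<gamma> i * Y i \<omega>) \<le> x} \<omega> \<partial>M) = 0"
    and J: "finite J"
  shows "(\<integral>\<omega>. e \<omega> * indicator {\<omega>\<in>space M. (\<Sum>j\<in>J. t j * Y j \<omega>) \<le> x} \<omega> \<partial>M) = 0"
proof -
  define p where "p = Suc (Max (insert 0 J))"
  define \<gamma> where "\<gamma> i = (if i \<in> J then t i else 0)" for i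
  have "J \<subseteq> {..<p}"
    using J by (auto simp: p_def less_Suc_eq_le)
  then have sum_J: "(\<Sum>j\<in>J. t j * Y j \<omega>) = (\<Sum>i<p. \<gamma> i * Y i \<omega>)" for \<omega>
    by (subst sum.mono_neutral_right[of "{..<p}" J]) (auto simp: \<gamma>_def)
  define s where "s = (\<Sum>i<p. (\<gamma> i)\<^sup>2)"
  have "0 \<le> s"
    unfolding s_def by (intro sum_nonneg) simp
  then consider "s = 0" | "s > 0"
    by linarith
  then show ?thesis
  proof cases
    case 1
    then have "\<gamma> i = 0" if "i < p" for i
      using that unfolding s_def by (subst (asm) sum_nonneg_eq_0_iff) auto
    then have "e \<omega> * indicator {\<omega>\<in>space M. (\<Sum>j\<in>J. t j * Y j \<omega>) \<le> x} \<omega> = (if 0 \<le> x then e \<omega> else 0)"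
      if "\<omega> \<in> space M" for \<omega>
      using that by (simp add: sum_J)
    then have "(\<integral>\<omega>. e \<omega> * indicator {\<omega>\<in>space M. (\<Sum>j\<in>J. t j * Y j \<omega>) \<le> x} \<omega> \<partial>M)
        = (\<integral>\<omega>. (if 0 \<le> x then e \<omega> else 0) \<partial>M)"
      by (rule Bochner_Integration.integral_cong[OF refl])
    then show ?thesis
      using e0 by (cases "0 \<le> x") simp_all
  next
    case 2
    define \<gamma>' where "\<gamma>' i = \<gamma> i / sqrt s" for i
    have "(\<Sum>i<p. (\<gamma>' i)\<^sup>2) = 1"
      using 2 by (simp add: \<gamma>'_def power_divide s_def flip: sum_divide_distrib)
    moreover have "{\<omega>\<in>space M. (\<Sum>j\<in>J. t j * Y j \<omega>) \<le> x}
        = {\<omega>\<in>space M. (\<Sum>i<p. \<gamma>' i * Y i \<omega>) \<le> x / sqrt s}"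
      using 2 by (simp add: sum_J \<gamma>'_def divide_le_cancel flip: sum_divide_distrib)
    ultimately show ?thesis
      using normalized[of p \<gamma>' "x / sqrt s"] by (simp add: p_def)
  qed
qed

lemma set_integral_lower_orthant_eq_0_if_char_eq_0:
  fixes e :: "'a \<Rightarrow> real" and Y :: "'i \<Rightarrow> 'a \<Rightarrow> real"
  assumes e: "integrable M e" and Y[measurable]: "\<And>i. Y i \<in> borel_measurable M"
    and char: "\<And>J t. finite J \<Longrightarrow> (\<integral>\<omega>. e \<omega> *\<^sub>R iexp (\<Sum>j\<in>J. t j * Y j \<omega>) \<partial>M) = 0"
    and I: "finite I"
  shows "(\<integral>\<omega>\<in>{\<omega>\<in>space M. \<forall>i\<in>I. Y i \<omega> \<le> x i}. e \<omega> \<partial>M) = 0"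
proof -
  have [measurable]: "e \<in> borel_measurable M"
    using e by simp
  define ind where "ind I \<omega> = (\<Prod>i\<in>I. indicator {..x i} (Y i \<omega>) :: real)" for I \<omega>
  have ind_bounded: "norm (ind I \<omega>) \<le> 1" for I \<omega>
    unfolding ind_def real_norm_def abs_prod by (intro prod_le_1) auto
  have [measurable]: "ind I \<in> borel_measurable M" for I
    unfolding ind_def by measurable
  have e_ind: "integrable M (\<lambda>\<omega>. e \<omega> * ind I \<omega>)" for I
    using integrable_scaleR_bounded[OF e _ ind_bounded] by simp
  \<comment> \<open>Each induction step trades the Fourier variable of \<open>Y k\<close> for the indicator of \<open>Y k \<le> x k\<close>.\<close>
  have "(\<integral>\<omega>. (e \<omega> * ind I \<omega>) *\<^sub>R iexp (\<Sum>j\<in>J. t j * Y j \<omega>) \<partial>M) = 0"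
    if "finite J" "I \<inter> J = {}" for J t
    using I that
  proof (induction I arbitrary: J t rule: finite_induct)
    case empty
    then show ?case
      using char by (simp add: ind_def)
  next
    case (insert k I)
    define w where "w \<omega> = (e \<omega> * ind I \<omega>) *\<^sub>R iexp (\<Sum>j\<in>J. t j * Y j \<omega>)" for \<omega>
    have w: "integrable M w"
      unfolding w_def using e_ind by (intro integrable_scaleR_bounded[where K=1]) simp_all
    have char_w: "(\<integral>\<omega>. w \<omega> * iexp (\<tau> * Y k \<omega>) \<partial>M) = 0" for \<tau>
    proof -
      have "w \<omega> * iexp (\<tau> * Y k \<omega>) = (e \<omega> * ind I \<omega>) *\<^sub>R iexp (\<Sum>j\<in>insert k J. (t(k := \<tau>)) j * Y j \<omega>)" for \<omega>
        using insert.hyps insert.prems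
        by (auto simp: w_def exp_add[symmetric] distrib_left algebra_simps
            intro!: sum.cong arg_cong[where f=exp])
      then show ?thesis
        using insert.IH[of "insert k J" "t(k := \<tau>)"] insert.hyps insert.prems by simp
    qed
    have "(\<integral>\<omega>. w \<omega> * indicator {..x k} (Y k \<omega>) \<partial>M) = 0"
      by (rule integral_complex_eq_0_if_char_eq_0[OF w Y borel_measurable_indicator _ char_w, of _ 1])
        (simp_all add: indicator_def)
    moreover have "w \<omega> * indicator {..x k} (Y k \<omega>) = (e \<omega> * ind (insert k I) \<omega>) *\<^sub>R iexp (\<Sum>j\<in>J. t j * Y j \<omega>)" for \<omega>
      using insert.hyps by (simp add: w_def ind_def scaleR_conv_of_real ac_simps indicator_def)
    ultimately show ?case
      by simp
  qed
  from this[of "{}"] have "(\<integral>\<omega>. e \<omega> * ind I \<omega> \<partial>M) = 0"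
    by (simp add: scaleR_conv_of_real flip: of_real_mult)
  moreover have "ind I \<omega> = indicator {\<omega>\<in>space M. \<forall>i\<in>I. Y i \<omega> \<le> x i} \<omega>" if "\<omega> \<in> space M" for \<omega>
    using I that unfolding ind_def by (induction I rule: finite_induct) (auto simp: indicator_def)
  ultimately show ?thesis
    unfolding set_lebesgue_integral_def
    by (subst Bochner_Integration.integral_cong[OF refl]) (simp_all add: mult.commute)
qed

lemma Int_stable_lower_orthants:
  fixes Y :: "'i \<Rightarrow> 'a \<Rightarrow> 'b::linorder"
  shows "Int_stable {{\<omega>\<in>\<Omega>. \<forall>i\<in>I. Y i \<omega> \<le> x i} | I x. finite I}"
proof (rule Int_stableI)
  fix a b
  assume "a \<in> {{\<omega>\<in>\<Omega>. \<forall>i\<in>I. Y i \<omega> \<le> x i} | I x. finite I}"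
    and "b \<in> {{\<omega>\<in>\<Omega>. \<forall>i\<in>I. Y i \<omega> \<le> x i} | I x. finite I}"
  then obtain I x J y where a: "a = {\<omega>\<in>\<Omega>. \<forall>i\<in>I. Y i \<omega> \<le> x i}" "finite I"
    and b: "b = {\<omega>\<in>\<Omega>. \<forall>i\<in>J. Y i \<omega> \<le> y i}" "finite J"
    by blast
  define z where "z i = (if i \<in> I \<and> i \<in> J then min (x i) (y i) else if i \<in> I then x i else y i)" for i
  have z: "Y i \<omega> \<le> z i \<longleftrightarrow> (i \<in> I \<longrightarrow> Y i \<omega> \<le> x i) \<and> (i \<in> J \<longrightarrow> Y i \<omega> \<le> y i)"
    if "i \<in> I \<union> J" for i \<omega>
    using that by (auto simp: z_def)
  have "a \<inter> b = {\<omega>\<in>\<Omega>. \<forall>i\<in>I \<union> J. Y i \<omega> \<le> z i}"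
    unfolding a b using z by blast
  with a(2) b(2) show "a \<inter> b \<in> {{\<omega>\<in>\<Omega>. \<forall>i\<in>I. Y i \<omega> \<le> x i} | I x. finite I}"
    by blast
qed

lemma set_integral_eq_0_on_sigma_sets:
  fixes e :: "'a \<Rightarrow> real"
  assumes e: "integrable M e" and G: "Int_stable G" "G \<subseteq> sets M" "space M \<in> G"
    and zero: "\<And>A. A \<in> G \<Longrightarrow> (\<integral>\<omega>\<in>A. e \<omega> \<partial>M) = 0"
    and A: "A \<in> sigma_sets (space M) G"
  shows "(\<integral>\<omega>\<in>A. e \<omega> \<partial>M) = 0"
proof -
  have sets: "sigma_sets (space M) G \<subseteq> sets M"
    using G(2) by (rule sets.sigma_sets_subset)
  have set_integrable: "set_integrable M B e" if "B \<in> sets M" for B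
    unfolding set_integrable_def using integrable_mult_indicator[OF that e] .
  have "G \<subseteq> Pow (space M)"
    using G(2) sets.sets_into_space by auto
  with G(1) show ?thesis
    using A
  proof (induction rule: sigma_sets_induct_disjoint)
    case (basic A)
    then show ?case by (rule zero)
  next
    case empty
    then show ?case by (simp add: set_lebesgue_integral_def)
  next
    case (compl A)
    then have "A \<in> sets M"
      using sets by auto
    then have "space M = (space M - A) \<union> A"
      using sets.sets_into_space by auto
    then have "(\<integral>\<omega>\<in>space M. e \<omega> \<partial>M) = (\<integral>\<omega>\<in>space M - A. e \<omega> \<partial>M) + (\<integral>\<omega>\<in>A. e \<omega> \<partial>M)"
      using \<open>A \<in> sets M\<close>
      by (metis Diff_disjoint Int_commute set_integral_Un set_integrable sets.compl_sets)
    then show ?case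
      using zero[OF G(3)] compl.IH by simp
  next
    case (union A)
    then have "A i \<in> sets M" for i
      using sets by auto
    then have "(\<integral>\<omega>\<in>(\<Union>i. A i). e \<omega> \<partial>M) = (\<Sum>i. (\<integral>\<omega>\<in>A i. e \<omega> \<partial>M))"
      using union.hyps(1) set_integrable
      by (intro lebesgue_integral_countable_add) (auto simp: disjoint_family_on_def)
    then show ?case
      using union.IH by simp
  qed
qed

lemma (in finite_measure) AE_real_cond_exp_eq_0_iff:
  assumes "subalgebra M F" and e: "integrable M e"
  shows "(AE \<omega> in M. real_cond_exp M F e \<omega> = 0) \<longleftrightarrow> (\<forall>A\<in>sets F. (\<integral>\<omega>\<in>A. e \<omega> \<partial>M) = 0)"
proof -
  interpret finite_measure_subalgebra M F
    using assms(1) by unfold_locales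
  show ?thesis
  proof
    assume AE: "AE \<omega> in M. real_cond_exp M F e \<omega> = 0"
    show "\<forall>A\<in>sets F. (\<integral>\<omega>\<in>A. e \<omega> \<partial>M) = 0"
    proof
      fix A assume "A \<in> sets F"
      then have "(\<integral>\<omega>\<in>A. e \<omega> \<partial>M) = (\<integral>\<omega>\<in>A. real_cond_exp M F e \<omega> \<partial>M)"
        by (rule real_cond_exp_intA[OF e])
      also have "\<dots> = 0"
      proof -
        have "AE \<omega> in M. indicator A \<omega> * real_cond_exp M F e \<omega> = 0"
          using AE by eventually_elim simp
        then show ?thesis
          unfolding set_lebesgue_integral_def by (simp add: integral_eq_zero_AE)
      qed
      finally show "(\<integral>\<omega>\<in>A. e \<omega> \<partial>M) = 0" .
    qed
  next
    assume "\<forall>A\<in>sets F. (\<integral>\<omega>\<in>A. e \<omega> \<partial>M) = 0"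
    then have "AE \<omega> in M. real_cond_exp M F e \<omega> = (\<lambda>_. 0) \<omega>"
      using e by (intro real_cond_exp_charact) (simp_all add: set_lebesgue_integral_def)
    then show "AE \<omega> in M. real_cond_exp M F e \<omega> = 0"
      by simp
  qed
qed

lemma subalgebra_vimage_algebra:
  assumes "f \<in> measurable M N"
  shows "subalgebra M (vimage_algebra (space M) f N)"
  using measurable_space[OF assms] measurable_sets[OF assms]
  by (auto simp: subalgebra_def sets_vimage_algebra2)

lemma halfline_in_vimage_algebra:
  fixes f :: "'a \<Rightarrow> real"
  shows "{\<omega>\<in>space M. f \<omega> \<le> x} \<in> sets (vimage_algebra (space M) f borel)"
proof -
  have "{\<omega>\<in>space M. f \<omega> \<le> x} = f -` {..x} \<inter> space M"
    by auto
  then show ?thesis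
    by (simp add: in_vimage_algebra)
qed

section \<open>Square-integrable processes on the unit interval\<close>

abbreviation lborel_01 :: "real measure" where
  "lborel_01 \<equiv> restrict_space lborel {0..1}"

lemma L2_01_iff_square_integrable: "L2_01 f \<longleftrightarrow> square_integrable lborel_01 f"
  unfolding L2_01_def square_integrable_def set_borel_measurable_def set_integrable_def
  by (simp add: borel_measurable_restrict_space_iff integrable_restrict_space)

lemma L2_inner_eq_inner_L2: "L2_inner f g = inner_L2 lborel_01 f g"
  unfolding L2_inner_def inner_L2_def set_lebesgue_integral_def
  by (simp add: integral_restrict_space)

lemma finite_measure_lborel_01: "finite_measure lborel_01"
  by (intro finite_measureI) (simp add: emeasure_restrict_space)

lemma orthonormal_basis_L2_iff: "orthonormal_basis_L2 \<psi> \<longleftrightarrow> complete_orthonormal_system lborel_01 \<psi>"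
  unfolding orthonormal_basis_L2_def complete_orthonormal_system_def orthonormal_system_def
  by (simp add: L2_01_iff_square_integrable L2_inner_eq_inner_L2 AE_restrict_space_iff)

lemma L2_01_combination:
  "orthonormal_basis_L2 \<psi> \<Longrightarrow> L2_01 (\<lambda>t. \<Sum>i<p. \<gamma> i * \<psi> i t)"
  by (simp add: orthonormal_basis_L2_iff complete_orthonormal_system_def L2_01_iff_square_integrable
      square_integrable_combination)

lemma proj_eq_L2_inner:
  assumes "orthonormal_basis_L2 \<psi>" "L2_01 f"
  shows "proj p \<gamma> \<psi> f = L2_inner f (\<lambda>t. \<Sum>i<p. \<gamma> i * \<psi> i t)"
  using assms
  by (simp add: proj_def orthonormal_basis_L2_iff complete_orthonormal_system_def L2_01_iff_square_integrable
      L2_inner_eq_inner_L2 inner_L2_commute[of _ f] inner_L2_combination_left)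

lemma L2_inner_Parseval:
  assumes "orthonormal_basis_L2 \<psi>" "L2_01 f" "L2_01 g"
  shows "(\<lambda>p. \<Sum>i<p. L2_inner g (\<psi> i) * L2_inner f (\<psi> i)) \<longlonglongrightarrow> L2_inner f g"
  using finite_measure.Parseval_identity[OF finite_measure_lborel_01] assms
  by (simp add: orthonormal_basis_L2_iff L2_01_iff_square_integrable L2_inner_eq_inner_L2)

lemma sets_sigma_L2:
  "sets (sigma_L2 M X) = sigma_sets (space M)
     {(\<lambda>\<omega>. L2_inner (X \<omega>) g) -` B \<inter> space M | g B. L2_01 g \<and> B \<in> sets borel}"
  unfolding sigma_L2_def by (rule sets_measure_of) blast

lemma space_sigma_L2: "space (sigma_L2 M X) = space M"
  unfolding sigma_L2_def by (rule space_measure_of) blast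

lemma subalgebra_sigma_L2:
  assumes "\<And>g. L2_01 g \<Longrightarrow> (\<lambda>\<omega>. L2_inner (X \<omega>) g) \<in> borel_measurable M"
  shows "subalgebra M (sigma_L2 M X)"
  unfolding subalgebra_def space_sigma_L2 sets_sigma_L2
  using assms by (auto intro!: sets.sigma_sets_subset measurable_sets)

lemma borel_measurable_proj:
  assumes "orthonormal_basis_L2 \<psi>" "\<forall>g. L2_01 g \<longrightarrow> (\<lambda>\<omega>. L2_inner (X \<omega>) g) \<in> borel_measurable M"
  shows "(\<lambda>\<omega>. proj p \<gamma> \<psi> (X \<omega>)) \<in> borel_measurable M"
proof -
  have [measurable]: "(\<lambda>\<omega>. L2_inner (X \<omega>) (\<psi> i)) \<in> borel_measurable M" for i
    using assms by (simp add: orthonormal_basis_L2_def)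
  show ?thesis
    unfolding proj_def by measurable
qed

lemma sets_vimage_proj_subset_sigma_L2:
  assumes "orthonormal_basis_L2 \<psi>" "\<forall>\<omega>\<in>space M. L2_01 (X \<omega>)"
  shows "sets (vimage_algebra (space M) (\<lambda>\<omega>. proj p \<gamma> \<psi> (X \<omega>)) borel) \<subseteq> sets (sigma_L2 M X)"
proof
  fix A assume "A \<in> sets (vimage_algebra (space M) (\<lambda>\<omega>. proj p \<gamma> \<psi> (X \<omega>)) borel)"
  then obtain B where B: "B \<in> sets borel" and A: "A = (\<lambda>\<omega>. proj p \<gamma> \<psi> (X \<omega>)) -` B \<inter> space M"
    by (auto simp: sets_vimage_algebra2)
  have "A = (\<lambda>\<omega>. L2_inner (X \<omega>) (\<lambda>t. \<Sum>i<p. \<gamma> i * \<psi> i t)) -` B \<inter> space M"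
    unfolding A using assms by (auto simp: proj_eq_L2_inner)
  then show "A \<in> sets (sigma_L2 M X)"
    unfolding sets_sigma_L2 using L2_01_combination[OF assms(1)] B
    by (intro sigma_sets.Basic CollectI exI conjI)
qed

lemma sets_sigma_L2_subset_lower_orthants:
  assumes onb: "orthonormal_basis_L2 \<psi>" and X: "\<forall>\<omega>\<in>space M. L2_01 (X \<omega>)"
  shows "sets (sigma_L2 M X) \<subseteq>
    sigma_sets (space M) {{\<omega>\<in>space M. \<forall>i\<in>I. L2_inner (X \<omega>) (\<psi> i) \<le> x i} | I x. finite I}"
    (is "_ \<subseteq> sigma_sets _ ?G")
proof -
  let ?N = "sigma (space M) ?G"
  have space_N: "space ?N = space M" and sets_N: "sets ?N = sigma_sets (space M) ?G"
    by (auto intro!: space_measure_of sets_measure_of)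
  have coordinate: "(\<lambda>\<omega>. L2_inner (X \<omega>) (\<psi> i)) \<in> borel_measurable ?N" for i
  proof (subst borel_measurable_iff_le, intro allI)
    fix a
    have "{\<omega>\<in>space ?N. L2_inner (X \<omega>) (\<psi> i) \<le> a} = {\<omega>\<in>space M. \<forall>j\<in>{i}. L2_inner (X \<omega>) (\<psi> j) \<le> a}"
      using space_N by simp
    also have "\<dots> \<in> ?G"
      by (intro CollectI exI[of _ "{i}"] exI[of _ "\<lambda>_. a"]) simp
    finally show "{\<omega>\<in>space ?N. L2_inner (X \<omega>) (\<psi> i) \<le> a} \<in> sets ?N"
      unfolding sets_N by (rule sigma_sets.Basic)
  qed
  \<comment> \<open>By Parseval, \<open>\<langle>X, g\<rangle>\<close> is a pointwise limit of finite combinations of the coordinates.\<close>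
  have "(\<lambda>\<omega>. L2_inner (X \<omega>) g) \<in> borel_measurable ?N" if "L2_01 g" for g
  proof (rule borel_measurable_LIMSEQ_real)
    show "(\<lambda>p. \<Sum>i<p. L2_inner g (\<psi> i) * L2_inner (X \<omega>) (\<psi> i)) \<longlonglongrightarrow> L2_inner (X \<omega>) g"
      if "\<omega> \<in> space ?N" for \<omega>
      using that X space_N by (intro L2_inner_Parseval[OF onb _ \<open>L2_01 g\<close>]) simp
    show "(\<lambda>\<omega>. \<Sum>i<p. L2_inner g (\<psi> i) * L2_inner (X \<omega>) (\<psi> i)) \<in> borel_measurable ?N" for p
      using coordinate by measurable
  qed
  then have "(\<lambda>\<omega>. L2_inner (X \<omega>) g) -` B \<inter> space M \<in> sigma_sets (space M) ?G"
    if "L2_01 g" "B \<in> sets borel" for g B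
    using measurable_sets[OF _ that(2), of _ ?N] that(1) space_N sets_N by simp
  then show ?thesis
    unfolding sets_sigma_L2 by (intro sigma_sets_mono) blast
qed

lemma set_integral_sigma_L2_eq_0_if_halflines:
  fixes e :: "'a \<Rightarrow> real"
  assumes e: "integrable M e" and e0: "(\<integral>\<omega>. e \<omega> \<partial>M) = 0"
    and X: "\<forall>\<omega>\<in>space M. L2_01 (X \<omega>)"
    and X_meas: "\<forall>g. L2_01 g \<longrightarrow> (\<lambda>\<omega>. L2_inner (X \<omega>) g) \<in> borel_measurable M"
    and onb: "orthonormal_basis_L2 \<psi>"
    and halflines: "\<forall>p\<ge>1. \<forall>\<gamma>. \<forall>x::real. (\<Sum>i<p. (\<gamma> i)\<^sup>2) = 1 \<longrightarrow>
        (\<integral>\<omega>. e \<omega> * indicator {\<omega>\<in>space M. proj p \<gamma> \<psi> (X \<omega>) \<le> x} \<omega> \<partial>M) = 0"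
    and A: "A \<in> sets (sigma_L2 M X)"
  shows "(\<integral>\<omega>\<in>A. e \<omega> \<partial>M) = 0"
proof -
  define Y where "Y i \<omega> = L2_inner (X \<omega>) (\<psi> i)" for i \<omega>
  have [measurable]: "Y i \<in> borel_measurable M" for i
    unfolding Y_def using X_meas onb by (simp add: orthonormal_basis_L2_def)
  have "(\<integral>\<omega>. e \<omega> * indicator {\<omega>\<in>space M. (\<Sum>j\<in>J. t j * Y j \<omega>) \<le> x} \<omega> \<partial>M) = 0"
    if "finite J" for J t x
    by (rule halfspace_integral_eq_0_if_normalized[OF e0 _ that]) (use halflines in \<open>simp add: proj_def Y_def\<close>)
  then have "(\<integral>\<omega>. e \<omega> *\<^sub>R iexp (1 * (\<Sum>j\<in>J. t j * Y j \<omega>)) \<partial>M) = 0" if "finite J" for J t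
    using that
    by (intro integral_eq_0_if_halfline_integrals_eq_0[OF e _ borel_measurable_iexp, where K=1]) simp_all
  then have char: "(\<integral>\<omega>. e \<omega> *\<^sub>R iexp (\<Sum>j\<in>J. t j * Y j \<omega>) \<partial>M) = 0" if "finite J" for J t
    using that by simp
  have orthants_zero: "(\<integral>\<omega>\<in>B. e \<omega> \<partial>M) = 0"
    if B: "B \<in> {{\<omega>\<in>space M. \<forall>i\<in>I. Y i \<omega> \<le> x i} | I x. finite I}" for B
  proof -
    obtain I x where "B = {\<omega>\<in>space M. \<forall>i\<in>I. Y i \<omega> \<le> x i}" "finite I"
      using B by blast
    then show ?thesis
      using set_integral_lower_orthant_eq_0_if_char_eq_0[OF e _ char] by simp
  qed
  have "{\<omega>\<in>space M. \<forall>i\<in>I. Y i \<omega> \<le> x i} \<in> sets M" if "finite I" for I x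
    using that by measurable
  then have orthants_sets: "{{\<omega>\<in>space M. \<forall>i\<in>I. Y i \<omega> \<le> x i} | I x. finite I} \<subseteq> sets M"
    by blast
  have space_orthant: "space M \<in> {{\<omega>\<in>space M. \<forall>i\<in>I. Y i \<omega> \<le> x i} | I x. finite I}"
    by (intro CollectI exI[of _ "{}"]) simp
  have "A \<in> sigma_sets (space M) {{\<omega>\<in>space M. \<forall>i\<in>I. Y i \<omega> \<le> x i} | I x. finite I}"
    unfolding Y_def by (rule subsetD[OF sets_sigma_L2_subset_lower_orthants[OF onb X] A])
  with orthants_zero show ?thesis
    by (rule set_integral_eq_0_on_sigma_sets[OF e Int_stable_lower_orthants orthants_sets space_orthant])
qed

theorem proposition1:
  fixes M :: "'a measure" and e :: "'a \<Rightarrow> real" and X :: "'a \<Rightarrow> real \<Rightarrow> real"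
    and \<psi> :: "nat \<Rightarrow> real \<Rightarrow> real"
  assumes "prob_space M"
    and "integrable M e"
    and "(\<integral>\<omega>. e \<omega> \<partial>M) = 0"
    and "\<forall>\<omega>\<in>space M. L2_01 (X \<omega>)"
    and "\<forall>g. L2_01 g \<longrightarrow> (\<lambda>\<omega>. L2_inner (X \<omega>) g) \<in> borel_measurable M"
    and "orthonormal_basis_L2 \<psi>"
  shows "((AE \<omega> in M. real_cond_exp M (sigma_L2 M X) e \<omega> = 0)
           \<longleftrightarrow> (\<forall>p\<ge>1. \<forall>\<gamma>. (\<Sum>i<p. (\<gamma> i)^2) = 1 \<longrightarrow>
                 (AE \<omega> in M. real_cond_exp M
                    (vimage_algebra (space M) (\<lambda>\<omega>. proj p \<gamma> \<psi> (X \<omega>)) borel) e \<omega> = 0)))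
       \<and> ((\<forall>p\<ge>1. \<forall>\<gamma>. (\<Sum>i<p. (\<gamma> i)^2) = 1 \<longrightarrow>
                 (AE \<omega> in M. real_cond_exp M
                    (vimage_algebra (space M) (\<lambda>\<omega>. proj p \<gamma> \<psi> (X \<omega>)) borel) e \<omega> = 0))
           \<longleftrightarrow> (\<forall>p\<ge>1. \<forall>\<gamma>. \<forall>x::real. (\<Sum>i<p. (\<gamma> i)^2) = 1 \<longrightarrow>
                 (\<integral>\<omega>. e \<omega> * indicator {\<omega>\<in>space M. proj p \<gamma> \<psi> (X \<omega>) \<le> x} \<omega> \<partial>M) = 0))"
proof -
  interpret prob_space M
    by (rule assms(1))
  note e = assms(2) and X = assms(4) and X_meas = assms(5) and onb = assms(6)
  define V where "V p \<gamma> = vimage_algebra (space M) (\<lambda>\<omega>. proj p \<gamma> \<psi> (X \<omega>)) borel" for p \<gamma>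
  have cond_exp_X: "(AE \<omega> in M. real_cond_exp M (sigma_L2 M X) e \<omega> = 0) \<longleftrightarrow>
      (\<forall>A\<in>sets (sigma_L2 M X). (\<integral>\<omega>\<in>A. e \<omega> \<partial>M) = 0)"
    using X_meas by (intro AE_real_cond_exp_eq_0_iff subalgebra_sigma_L2 e) simp
  have cond_exp_V: "(AE \<omega> in M. real_cond_exp M (V p \<gamma>) e \<omega> = 0) \<longleftrightarrow>
      (\<forall>A\<in>sets (V p \<gamma>). (\<integral>\<omega>\<in>A. e \<omega> \<partial>M) = 0)" for p \<gamma>
    unfolding V_def using borel_measurable_proj[OF onb X_meas]
    by (intro AE_real_cond_exp_eq_0_iff subalgebra_vimage_algebra e)
  have i_ii: "\<forall>A\<in>sets (V p \<gamma>). (\<integral>\<omega>\<in>A. e \<omega> \<partial>M) = 0"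
    if "\<forall>A\<in>sets (sigma_L2 M X). (\<integral>\<omega>\<in>A. e \<omega> \<partial>M) = 0" for p \<gamma>
    using that sets_vimage_proj_subset_sigma_L2[OF onb X] unfolding V_def by blast
  have ii_iii: "(\<integral>\<omega>. e \<omega> * indicator {\<omega>\<in>space M. proj p \<gamma> \<psi> (X \<omega>) \<le> x} \<omega> \<partial>M) = 0"
    if "\<forall>A\<in>sets (V p \<gamma>). (\<integral>\<omega>\<in>A. e \<omega> \<partial>M) = 0" for p \<gamma> x
    using that[unfolded V_def] halfline_in_vimage_algebra[of M "\<lambda>\<omega>. proj p \<gamma> \<psi> (X \<omega>)" x]
    by (simp add: set_lebesgue_integral_def mult.commute)
  have iii_i: "\<forall>A\<in>sets (sigma_L2 M X). (\<integral>\<omega>\<in>A. e \<omega> \<partial>M) = 0"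
    if "\<forall>p\<ge>1. \<forall>\<gamma>. \<forall>x::real. (\<Sum>i<p. (\<gamma> i)^2) = 1 \<longrightarrow>
          (\<integral>\<omega>. e \<omega> * indicator {\<omega>\<in>space M. proj p \<gamma> \<psi> (X \<omega>) \<le> x} \<omega> \<partial>M) = 0"
    using set_integral_sigma_L2_eq_0_if_halflines[OF e assms(3) X X_meas onb that] by blast
  show ?thesis
    unfolding V_def[symmetric] cond_exp_X cond_exp_V
    using i_ii ii_iii iii_i by blast
qed

end
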